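(* Let $(a_k)_{k\ge 0}$ and $(\lambda_k)_{k\ge 1}$ be complex numbers, and define $\mu_0=1$ and, for $n\ge 1$, $\mu_n=\sum_{\pi\in\mathcal{M}_n} v(\pi)$. Let $(c_n)_{n\ge1}$ be the free cumulants of $(\mu_n)$. Then for every $n\ge 2$, $$c_n=\sum_{\pi\in\mathcal{M}_n}\frac{(-1)^{|\pi|_0-1}}{n-1}\binom{n-1}{|\pi|_0}\,v(\pi).$$ (In particular the path consisting of $n$ horizontal steps contributes $0$, since then $|\pi|_0=n$.)
   Context: A Motzkin path of length $n$ is a sequence of integers $\pi=(\pi(0),\pi(1),\dots,\pi(n))$ with $\pi(0)=\pi(n)=0$, $\pi(i)\ge 0$ for all $i$, and $\pi(i)-\pi(i-1)\in\{1,0,-1\}$ for $i=1,\dots,n$ (rising, horizontal, falling step respectively). $\mathcal{M}_n$ denotes the set of Motzkin paths of length $n$. The valuation of a path is $v(\pi)=\prod_{i=1}^n v_i$, where $v_i=1$ if the $i$-th step rises, $v_i=a_{\pi(i-1)}$ if the $i$-th step is horizontal, and $v_i=\lambda_{\pi(i-1)}$ if the $i$-th step falls. $|\pi|_0$ denotes the number of returns to zero of $\pi$, i.e. the number of indices $i\in\{1,\dots,n\}$ with $\pi(i)=0$. Free cumulants: with $M(z)=1+\sum_{n\ge1}\mu_n z^n$ (formal power series), the free cumulants $c_n$ are the coefficients of the formal power series $C(z)=1+\sum_{n\ge1}c_nz^n$ uniquely determined by $C(zM(z))=M(z)$. *)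

theory Defs
  imports Complex_Main "HOL-Computational_Algebra.Formal_Power_Series"
begin

text \<open>A Motzkin path of length n is represented by the list of its heights
  [pi(0), pi(1), ..., pi(n)] (a list of length n+1).\<close>

definition motzkin_paths :: "nat \<Rightarrow> int list set" where
  "motzkin_paths n = {p. length p = Suc n \<and> p ! 0 = 0 \<and> p ! n = 0 \<and>
      (\<forall>i\<le>n. p ! i \<ge> 0) \<and>
      (\<forall>i\<in>{1..n}. p ! i - p ! (i - 1) \<in> {1, 0, -1})}"

definition step_val :: "(nat \<Rightarrow> complex) \<Rightarrow> (nat \<Rightarrow> complex) \<Rightarrow> int list \<Rightarrow> nat \<Rightarrow> complex" where
  "step_val a lam p i =
     (if p ! i - p ! (i - 1) = 1 then 1
      else if p ! i - p ! (i - 1) = 0 then a (nat (p ! (i - 1)))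
      else lam (nat (p ! (i - 1))))"

definition path_val :: "(nat \<Rightarrow> complex) \<Rightarrow> (nat \<Rightarrow> complex) \<Rightarrow> int list \<Rightarrow> complex" where
  "path_val a lam p = (\<Prod>i\<in>{1..length p - 1}. step_val a lam p i)"

definition returns0 :: "int list \<Rightarrow> nat" where
  "returns0 p = card {i\<in>{1..length p - 1}. p ! i = 0}"

definition moment :: "(nat \<Rightarrow> complex) \<Rightarrow> (nat \<Rightarrow> complex) \<Rightarrow> nat \<Rightarrow> complex" where
  "moment a lam n = (if n = 0 then 1 else (\<Sum>p\<in>motzkin_paths n. path_val a lam p))"

definition free_cumulant :: "(nat \<Rightarrow> complex) \<Rightarrow> nat \<Rightarrow> complex" where
  "free_cumulant mu n = fps_nth
     (THE C. fps_nth C 0 = 1 \<and> fps_compose C (fps_X * Abs_fps mu) = Abs_fps mu) n"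

end

theory Submission
  imports Defs
begin

(*
  Cutting a Motzkin path at its returns to zero shows that the total weight of the paths
  with exactly k returns is [z^n] F^k, where F is the generating function of the primitive
  paths (those with a single return). Hence the moment series is M = 1/(1 - F). Writing
  psi = 1 - F, the relation C(zM) = M says that C is M composed with the compositional
  inverse of z/psi, and Lagrange inversion gives c_n = -[z^n] psi^(n-1) / (n-1). Expanding
  (1 - F)^(n-1) binomially and reading [z^n] F^k as a sum over paths with k returns gives
  the formula.
*)

unbundle fps_syntax

section \<open>Formal power series\<close>

lemma geometric_fps_mult_one_minus:
  fixes f M :: "'a::comm_ring_1 fps"
  assumes f0: "f $ 0 = 0" and M: "\<And>n. M $ n = (\<Sum>k\<le>n. f ^ k $ n)"
  shows "M * (1 - f) = 1"
proof (rule fps_ext)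
  fix n
  define S where "S = (\<Sum>k\<le>n. f ^ k)"
  have "M $ i = S $ i" if "i \<le> n" for i
    unfolding M S_def fps_sum_nth
    using that startsby_zero_power_prefix[OF f0] by (intro sum.mono_neutral_left) auto
  then have "(M * (1 - f)) $ n = (S * (1 - f)) $ n"
    unfolding fps_mult_nth by (intro sum.cong refl) simp
  also have "S * (1 - f) = 1 - f ^ Suc n"
    unfolding S_def one_diff_power_eq lessThan_Suc_atMost by (simp add: mult.commute)
  moreover have "f ^ Suc n $ n = 0"
    using startsby_zero_power_prefix[OF f0] by blast
  ultimately show "(M * (1 - f)) $ n = 1 $ n"
    by simp
qed

lemma one_minus_power_nth:
  fixes f :: "'a::comm_ring_1 fps"
  shows "(1 - f) ^ m $ n = (\<Sum>k\<le>m. (-1) ^ k * of_nat (m choose k) * f ^ k $ n)"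
proof -
  have sign_nth: "((-1) ^ k * g) $ n = (-1) ^ k * g $ n" for k and g :: "'a fps"
    by (induction k) (simp_all add: mult.assoc)
  have neg_power: "(-f) ^ k $ n = (-1) ^ k * f ^ k $ n" for k
    by (subst power_minus) (rule sign_nth)
  have "(1 - f) ^ m = (\<Sum>k\<le>m. fps_const (of_nat (m choose k)) * (-f) ^ k)"
    using binomial_ring[of "-f" 1 m] by (simp add: fps_of_nat)
  then show ?thesis
    by (simp add: fps_sum_nth neg_power mult_ac)
qed

lemma fps_deriv_power_nth:
  fixes f :: "'a::comm_semiring_1 fps"
  shows "of_nat m * (fps_deriv f * f ^ (m - 1)) $ i = of_nat (Suc i) * f ^ m $ Suc i"
proof -
  have "fps_deriv (f ^ m) $ i = of_nat (Suc i) * f ^ m $ Suc i" by simp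
  then show ?thesis by (simp add: fps_deriv_power' fps_of_nat[symmetric] mult.assoc)
qed


section \<open>Lagrange inversion\<close>

lemma fps_deriv_right_inverse:
  fixes M \<psi> :: "'a::comm_ring_1 fps"
  assumes "M * \<psi> = 1"
  shows "fps_deriv M = - (M\<^sup>2 * fps_deriv \<psi>)"
proof -
  have "fps_deriv M = fps_deriv M * (M * \<psi>)"
    using assms by simp
  also have "\<dots> = M * (fps_deriv M * \<psi> + M * fps_deriv \<psi>) - M\<^sup>2 * fps_deriv \<psi>"
    by (simp add: algebra_simps power2_eq_square)
  also have "fps_deriv M * \<psi> + M * fps_deriv \<psi> = 0"
    using arg_cong[OF assms, of fps_deriv] by (simp add: add.commute)
  finally show ?thesis
    by simp
qed

lemma lagrange_coeff_delta:
  fixes M \<psi> :: "'a::field_char_0 fps"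
  assumes M\<psi>: "M * \<psi> = 1" and "1 \<le> n" "j \<le> n"
  shows "(fps_deriv ((fps_X * M) ^ j) * \<psi> ^ n) $ (n - 1) = (if j = n then of_nat n else 0)"
proof (cases "j = 0")
  case True
  then show ?thesis using \<open>1 \<le> n\<close> by simp
next
  case False
  define m where "m = n - j"
  obtain i where j: "j = Suc i" using False by (cases j) auto
  have dG: "fps_deriv (fps_X * M) = M * (1 - fps_X * M * fps_deriv \<psi>)"
    using fps_deriv_right_inverse[OF M\<psi>] by (simp add: algebra_simps power2_eq_square)
  have "fps_deriv ((fps_X * M) ^ j) * \<psi> ^ n
      = fps_X ^ i * (of_nat j * ((M ^ j * \<psi> ^ n) * (1 - fps_X * M * fps_deriv \<psi>)))"
    unfolding fps_deriv_power' dG by (simp add: j power_mult_distrib algebra_simps)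
  also have "M ^ j * \<psi> ^ n = (M * \<psi>) ^ j * \<psi> ^ m"
    using \<open>j \<le> n\<close> by (simp add: m_def power_mult_distrib flip: power_add)
  finally have "fps_deriv ((fps_X * M) ^ j) * \<psi> ^ n
      = fps_X ^ i * (of_nat j * (\<psi> ^ m * (1 - fps_X * M * fps_deriv \<psi>)))"
    using M\<psi> by simp
  then have coeff: "(fps_deriv ((fps_X * M) ^ j) * \<psi> ^ n) $ (n - 1)
      = of_nat j * (\<psi> ^ m * (1 - fps_X * M * fps_deriv \<psi>)) $ m"
    using \<open>j \<le> n\<close> by (simp add: fps_X_power_mult_nth j m_def fps_of_nat[symmetric])
  show ?thesis
  proof (cases m)
    case 0
    then show ?thesis using coeff \<open>j \<le> n\<close> by (simp add: m_def)
  next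
    case (Suc m')
    have "\<psi> ^ m * (1 - fps_X * M * fps_deriv \<psi>) = \<psi> ^ m - fps_X * (fps_deriv \<psi> * \<psi> ^ m')"
      using M\<psi> by (simp add: Suc algebra_simps)
    moreover have "(fps_deriv \<psi> * \<psi> ^ m') $ m' = \<psi> ^ m $ m"
      using fps_deriv_power_nth[of m \<psi> m'] by (simp add: Suc del: of_nat_Suc)
    ultimately show ?thesis using coeff Suc \<open>j \<le> n\<close> by (simp add: m_def)
  qed
qed

lemma lagrange_inversion:
  fixes M \<psi> C \<Phi> :: "'a::field_char_0 fps"
  assumes M\<psi>: "M * \<psi> = 1" and comp: "C oo (fps_X * M) = \<Phi>" and n: "1 \<le> n"
  shows "of_nat n * C $ n = (fps_deriv \<Phi> * \<psi> ^ n) $ (n - 1)"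
proof -
  define G where "G = fps_X * M"
  define P where "P = (\<Sum>j\<le>n. fps_const (C $ j) * G ^ j)"
  have "P $ i = \<Phi> $ i" if "i \<le> n" for i
  proof -
    have "P $ i = (\<Sum>j\<le>n. C $ j * G ^ j $ i)"
      by (simp add: P_def fps_sum_nth)
    also have "\<dots> = (\<Sum>j=0..i. C $ j * G ^ j $ i)"
      using that by (intro sum.mono_neutral_right)
        (auto simp: G_def power_mult_distrib fps_X_power_mult_nth)
    also have "\<dots> = (C oo G) $ i"
      by (simp add: fps_compose_nth)
    finally show ?thesis
      using comp by (simp add: G_def)
  qed
  then have "(fps_deriv \<Phi> * \<psi> ^ n) $ (n - 1) = (fps_deriv P * \<psi> ^ n) $ (n - 1)"
    using n unfolding fps_mult_nth by (intro sum.cong refl) simp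
  also have "\<dots> = (\<Sum>j\<le>n. C $ j * (fps_deriv (G ^ j) * \<psi> ^ n) $ (n - 1))"
    by (simp add: P_def fps_deriv_sum sum_distrib_right fps_sum_nth mult.assoc)
  also have "\<dots> = (\<Sum>j\<le>n. if j = n then C $ n * of_nat n else 0)"
    using lagrange_coeff_delta[OF M\<psi> n] by (intro sum.cong refl) (simp add: G_def)
  finally show ?thesis
    by (simp add: mult.commute)
qed

lemma lagrange_inversion_self:
  fixes M \<psi> C :: "'a::field_char_0 fps"
  assumes M\<psi>: "M * \<psi> = 1" and comp: "C oo (fps_X * M) = M" and n: "2 \<le> n"
  shows "C $ n = - (\<psi> ^ (n - 1) $ n) / of_nat (n - 1)"
proof -
  obtain k where k: "n = Suc (Suc k)"
    using n by (metis add_2_eq_Suc le_Suc_ex)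
  have "fps_deriv M * \<psi> ^ n = - (fps_deriv \<psi> * \<psi> ^ k) * (M * \<psi>)\<^sup>2"
    unfolding fps_deriv_right_inverse[OF M\<psi>] k by (simp add: algebra_simps power2_eq_square)
  moreover have "of_nat n * C $ n = (fps_deriv M * \<psi> ^ n) $ (n - 1)"
    using lagrange_inversion[OF M\<psi> comp] n by simp
  ultimately have "of_nat n * C $ n = - (fps_deriv \<psi> * \<psi> ^ k) $ Suc k"
    using M\<psi> k by simp
  moreover have "of_nat (Suc k) * (fps_deriv \<psi> * \<psi> ^ k) $ Suc k = of_nat n * \<psi> ^ Suc k $ n"
    using fps_deriv_power_nth[of "Suc k" \<psi> "Suc k"] k by simp
  ultimately have "of_nat n * (of_nat (n - 1) * C $ n) = of_nat n * (- (\<psi> ^ (n - 1) $ n))"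
    using k by (simp add: algebra_simps del: of_nat_Suc)
  then have "of_nat (n - 1) * C $ n = - (\<psi> ^ (n - 1) $ n)"
    using n by (subst (asm) mult_left_cancel) auto
  moreover have "(of_nat (n - 1) :: 'a) \<noteq> 0"
    using n by simp
  ultimately show ?thesis
    by (simp add: field_simps)
qed

lemma fps_compose_inv_compose:
  fixes G :: "'a::field fps"
  assumes "G $ 0 = 0" "G $ 1 \<noteq> 0"
  shows "(F oo fps_inv G) oo G = F"
proof -
  have "fps_inv G $ 0 = 0"
    by (simp add: fps_inv_def)
  then show ?thesis
    using assms by (simp add: fps_inv flip: fps_compose_assoc)
qed

lemma the_fps_compose_solution:
  fixes G :: "'a::field fps"
  assumes "G $ 0 = 0" "G $ 1 \<noteq> 0" "F $ 0 = c"
  shows "(THE C. C $ 0 = c \<and> C oo G = F) = F oo fps_inv G"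
proof (rule the_equality)
  show "(F oo fps_inv G) $ 0 = c \<and> (F oo fps_inv G) oo G = F"
    using assms fps_compose_inv_compose by simp
next
  fix C assume "C $ 0 = c \<and> C oo G = F"
  then show "C = F oo fps_inv G"
    using assms fps_compose_inv_compose fps_compose_inj_right by metis
qed

lemma free_cumulant_eq_coeff_power:
  fixes mu :: "nat \<Rightarrow> complex" and \<psi> :: "complex fps"
  assumes "mu 0 = 1" and M\<psi>: "Abs_fps mu * \<psi> = 1" and "2 \<le> n"
  shows "free_cumulant mu n = - (\<psi> ^ (n - 1) $ n) / of_nat (n - 1)"
proof -
  define G where "G = fps_X * Abs_fps mu"
  have G: "G $ 0 = 0" "G $ 1 \<noteq> 0"
    using \<open>mu 0 = 1\<close> by (simp_all add: G_def)
  have "(THE C. C $ 0 = 1 \<and> C oo G = Abs_fps mu) = Abs_fps mu oo fps_inv G"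
    using \<open>mu 0 = 1\<close> by (intro the_fps_compose_solution[OF G]) simp
  then have "free_cumulant mu n = (Abs_fps mu oo fps_inv G) $ n"
    by (simp add: free_cumulant_def G_def)
  also have "\<dots> = - (\<psi> ^ (n - 1) $ n) / of_nat (n - 1)"
    using lagrange_inversion_self[OF M\<psi> _ \<open>2 \<le> n\<close>] fps_compose_inv_compose[OF G]
    by (simp add: G_def)
  finally show ?thesis .
qed


section \<open>Motzkin paths and their concatenation\<close>

lemma motzkin_pathsD:
  assumes "p \<in> motzkin_paths n"
  shows "length p = Suc n" "p ! 0 = 0" "p ! n = 0" "\<And>i. i \<le> n \<Longrightarrow> 0 \<le> p ! i"
    "\<And>i. 1 \<le> i \<Longrightarrow> i \<le> n \<Longrightarrow> p ! i - p ! (i - 1) \<in> {1, 0, -1}"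
  using assms unfolding motzkin_paths_def by auto

lemma motzkin_pathsI:
  assumes "length p = Suc n" "p ! 0 = 0" "p ! n = 0" "\<And>i. i \<le> n \<Longrightarrow> 0 \<le> p ! i"
    "\<And>i. 1 \<le> i \<Longrightarrow> i \<le> n \<Longrightarrow> p ! i - p ! (i - 1) \<in> {1, 0, -1}"
  shows "p \<in> motzkin_paths n"
  using assms unfolding motzkin_paths_def by auto

lemma motzkin_path_height_le:
  assumes "p \<in> motzkin_paths n" "i \<le> n"
  shows "p ! i \<le> int i"
  using assms(2)
proof (induction i)
  case 0
  then show ?case using motzkin_pathsD(2)[OF assms(1)] by simp
next
  case (Suc i)
  then show ?case using motzkin_pathsD(5)[OF assms(1), of "Suc i"] by auto
qed

lemma finite_motzkin_paths: "finite (motzkin_paths n)"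
proof (rule finite_subset)
  show "motzkin_paths n \<subseteq> {p. set p \<subseteq> {0..int n} \<and> length p = Suc n}"
  proof safe
    fix p x assume p: "p \<in> motzkin_paths n" and "x \<in> set p"
    then obtain i where "i < Suc n" "x = p ! i"
      using motzkin_pathsD(1)[OF p] by (metis in_set_conv_nth)
    then have "i \<le> n"
      by simp
    then show "x \<in> {0..int n}"
      using motzkin_pathsD(4)[OF p] motzkin_path_height_le[OF p] \<open>x = p ! i\<close> by force
  qed (rule motzkin_pathsD(1))
qed (rule finite_lists_length_eq, simp)

lemma motzkin_paths_0: "motzkin_paths 0 = {[0]}"
proof -
  have "p \<in> motzkin_paths 0 \<longleftrightarrow> p = [0]" for p
    using motzkin_pathsD(1,2)[of p 0] motzkin_pathsI[of "[0]" 0] by (cases p) auto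
  then show ?thesis by blast
qed

lemma returns0_eq_card:
  assumes "p \<in> motzkin_paths n"
  shows "returns0 p = card {i\<in>{1..n}. p ! i = 0}"
  using motzkin_pathsD(1)[OF assms] by (simp add: returns0_def)

lemma returns0_le:
  assumes "p \<in> motzkin_paths n"
  shows "returns0 p \<le> n"
proof -
  have "card {i\<in>{1..n}. p ! i = 0} \<le> card {1..n}"
    by (rule card_mono) auto
  then show ?thesis
    using returns0_eq_card[OF assms] by simp
qed

lemma returns0_pos:
  assumes "p \<in> motzkin_paths n" "0 < n"
  shows "0 < returns0 p"
  using assms motzkin_pathsD(3)[OF assms(1)] returns0_eq_card[OF assms(1)]
  by (auto simp: card_gt_0_iff)

lemma returns0_eq_1_iff:
  assumes "p \<in> motzkin_paths n"
  shows "returns0 p = 1 \<longleftrightarrow> 0 < n \<and> (\<forall>i. 0 < i \<and> i < n \<longrightarrow> p ! i \<noteq> 0)"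
proof
  assume "returns0 p = 1"
  then obtain x where x: "{i\<in>{1..n}. p ! i = 0} = {x}"
    using returns0_eq_card[OF assms] card_1_singleton_iff by (metis One_nat_def)
  then have "0 < n"
    by auto
  then have "n \<in> {i\<in>{1..n}. p ! i = 0}"
    using motzkin_pathsD(3)[OF assms] by simp
  then have "n \<in> {x}"
    by (simp only: x)
  then have Z: "{i\<in>{1..n}. p ! i = 0} = {n}"
    using x by simp
  show "0 < n \<and> (\<forall>i. 0 < i \<and> i < n \<longrightarrow> p ! i \<noteq> 0)"
  proof (intro conjI allI impI notI)
    fix i assume i: "0 < i \<and> i < n" and "p ! i = 0"
    then have "i \<in> {i\<in>{1..n}. p ! i = 0}"
      by simp
    then have "i \<in> {n}"
      by (simp only: Z)
    then show False
      using i by simp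
  qed (rule \<open>0 < n\<close>)
next
  assume "0 < n \<and> (\<forall>i. 0 < i \<and> i < n \<longrightarrow> p ! i \<noteq> 0)"
  then have "{i\<in>{1..n}. p ! i = 0} = {n}"
    using motzkin_pathsD(3)[OF assms] by (auto simp: le_less)
  then show "returns0 p = 1"
    using returns0_eq_card[OF assms] by simp
qed

definition path_concat :: "int list \<Rightarrow> int list \<Rightarrow> int list" where
  "path_concat q r = q @ tl r"

context
  fixes q r :: "int list" and j m :: nat
  assumes q: "q \<in> motzkin_paths j" and r: "r \<in> motzkin_paths m"
begin

lemma length_path_concat: "length (path_concat q r) = Suc (j + m)"
  using motzkin_pathsD(1)[OF q] motzkin_pathsD(1)[OF r] by (simp add: path_concat_def)

lemma path_concat_nth_le:
  assumes "i \<le> j"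
  shows "path_concat q r ! i = q ! i"
  using assms motzkin_pathsD(1)[OF q] by (simp add: path_concat_def nth_append)

lemma path_concat_nth_ge:
  assumes "j \<le> i" "i \<le> j + m"
  shows "path_concat q r ! i = r ! (i - j)"
proof (cases "i = j")
  case True
  then show ?thesis
    using path_concat_nth_le motzkin_pathsD(3)[OF q] motzkin_pathsD(2)[OF r] by simp
next
  case False
  then show ?thesis
    using assms motzkin_pathsD(1)[OF q] motzkin_pathsD(1)[OF r]
    by (simp add: path_concat_def nth_append nth_tl Suc_diff_Suc)
qed

lemma path_concat_in_motzkin_paths: "path_concat q r \<in> motzkin_paths (j + m)"
proof (rule motzkin_pathsI)
  show "length (path_concat q r) = Suc (j + m)"
    by (rule length_path_concat)
  show "path_concat q r ! 0 = 0"
    using path_concat_nth_le[of 0] motzkin_pathsD(2)[OF q] by simp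
  show "path_concat q r ! (j + m) = 0"
    using path_concat_nth_ge[of "j + m"] motzkin_pathsD(3)[OF r] by simp
  show "0 \<le> path_concat q r ! i" if "i \<le> j + m" for i
    using that path_concat_nth_le[of i] path_concat_nth_ge[of i]
      motzkin_pathsD(4)[OF q, of i] motzkin_pathsD(4)[OF r, of "i - j"] by (cases "i \<le> j") auto
  show "path_concat q r ! i - path_concat q r ! (i - 1) \<in> {1, 0, -1}"
    if "1 \<le> i" "i \<le> j + m" for i
  proof (cases "i \<le> j")
    case True
    then show ?thesis
      using that path_concat_nth_le[of i] path_concat_nth_le[of "i - 1"] motzkin_pathsD(5)[OF q, of i]
      by simp
  next
    case False
    then show ?thesis
      using that path_concat_nth_ge[of i] path_concat_nth_ge[of "i - 1"] motzkin_pathsD(5)[OF r, of "i - j"]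
      by (simp add: diff_commute)
  qed
qed

lemma path_val_path_concat: "path_val a lam (path_concat q r) = path_val a lam q * path_val a lam r"
proof -
  have "path_val a lam (path_concat q r)
      = (\<Prod>i\<in>{1..j}. step_val a lam (path_concat q r) i)
        * (\<Prod>i\<in>{1..m}. step_val a lam (path_concat q r) (i + j))"
    unfolding path_val_def length_path_concat
    using prod.ub_add_nat[of 1 j "\<lambda>i. step_val a lam (path_concat q r) i" m]
      prod.shift_bounds_cl_nat_ivl[of "\<lambda>i. step_val a lam (path_concat q r) i" 1 j m]
    by (simp add: add.commute)
  also have "(\<Prod>i\<in>{1..j}. step_val a lam (path_concat q r) i) = path_val a lam q"
    unfolding path_val_def motzkin_pathsD(1)[OF q] diff_Suc_1
    by (intro prod.cong refl) (auto simp: step_val_def path_concat_nth_le)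
  also have "(\<Prod>i\<in>{1..m}. step_val a lam (path_concat q r) (i + j)) = path_val a lam r"
    unfolding path_val_def motzkin_pathsD(1)[OF r] diff_Suc_1
  proof (intro prod.cong refl)
    fix i assume "i \<in> {1..m}"
    then have "path_concat q r ! (i + j) = r ! i" "path_concat q r ! (i + j - 1) = r ! (i - 1)"
      using path_concat_nth_ge[of "i + j"] path_concat_nth_ge[of "i + j - 1"] by auto
    then show "step_val a lam (path_concat q r) (i + j) = step_val a lam r i"
      by (simp add: step_val_def)
  qed
  finally show ?thesis .
qed

lemma returns0_path_concat: "returns0 (path_concat q r) = returns0 q + returns0 r"
proof -
  let ?Z = "\<lambda>p k. {i\<in>{1..k}. p ! i = 0}"
  have "?Z (path_concat q r) (j + m) = ?Z q j \<union> (\<lambda>i. i + j) ` ?Z r m"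
  proof (intro equalityI subsetI)
    fix i assume i: "i \<in> ?Z (path_concat q r) (j + m)"
    show "i \<in> ?Z q j \<union> (\<lambda>i. i + j) ` ?Z r m"
    proof (cases "i \<le> j")
      case True
      then show ?thesis using i path_concat_nth_le[of i] by auto
    next
      case False
      then have "i - j \<in> ?Z r m" "i = (i - j) + j"
        using i path_concat_nth_ge[of i] by auto
      then show ?thesis by blast
    qed
  qed (auto simp: path_concat_nth_le path_concat_nth_ge)
  moreover have "card ((\<lambda>i. i + j) ` ?Z r m) = card (?Z r m)"
    by (rule card_image) (simp add: inj_on_def)
  moreover have "card (?Z q j \<union> (\<lambda>i. i + j) ` ?Z r m) = card (?Z q j) + card ((\<lambda>i. i + j) ` ?Z r m)"
    by (rule card_Un_disjoint) auto
  ultimately show ?thesis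
    using returns0_eq_card[OF path_concat_in_motzkin_paths] returns0_eq_card[OF q]
      returns0_eq_card[OF r] by simp
qed

lemma take_path_concat: "take (Suc j) (path_concat q r) = q"
  using motzkin_pathsD(1)[OF q] by (simp add: path_concat_def)

lemma drop_path_concat: "drop j (path_concat q r) = r"
proof (rule nth_equalityI)
  show "length (drop j (path_concat q r)) = length r"
    using length_path_concat motzkin_pathsD(1)[OF r] by simp
  fix i assume "i < length (drop j (path_concat q r))"
  then show "drop j (path_concat q r) ! i = r ! i"
    using length_path_concat path_concat_nth_ge[of "j + i"] by simp
qed

end

lemma motzkin_path_split:
  assumes p: "p \<in> motzkin_paths n" and "j \<le> n" "p ! j = 0"
  shows "take (Suc j) p \<in> motzkin_paths j" "drop j p \<in> motzkin_paths (n - j)"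
    "path_concat (take (Suc j) p) (drop j p) = p"
proof -
  note D = motzkin_pathsD[OF p]
  show "take (Suc j) p \<in> motzkin_paths j"
    using D assms(2,3) by (intro motzkin_pathsI) (auto simp: nth_take)
  show "drop j p \<in> motzkin_paths (n - j)"
    using D assms(2,3) by (intro motzkin_pathsI) (auto simp: nth_drop)
  show "path_concat (take (Suc j) p) (drop j p) = p"
    by (metis append_take_drop_id drop_Suc tl_drop path_concat_def)
qed


section \<open>Decomposition at the returns to zero\<close>

definition paths_with_returns :: "nat \<Rightarrow> nat \<Rightarrow> int list set" where
  "paths_with_returns n k = {p \<in> motzkin_paths n. returns0 p = k}"

definition returns_weight :: "(nat \<Rightarrow> complex) \<Rightarrow> (nat \<Rightarrow> complex) \<Rightarrow> nat \<Rightarrow> nat \<Rightarrow> complex" where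
  "returns_weight a lam n k = (\<Sum>p\<in>paths_with_returns n k. path_val a lam p)"

lemma finite_paths_with_returns: "finite (paths_with_returns n k)"
  unfolding paths_with_returns_def using finite_motzkin_paths by simp

lemma sum_motzkin_paths_by_returns:
  "(\<Sum>p\<in>motzkin_paths n. f (returns0 p) * path_val a lam p) = (\<Sum>k\<le>n. f k * returns_weight a lam n k)"
proof -
  have "(\<Sum>p\<in>motzkin_paths n. f (returns0 p) * path_val a lam p)
      = (\<Sum>k\<le>n. \<Sum>p\<in>paths_with_returns n k. f (returns0 p) * path_val a lam p)"
    unfolding paths_with_returns_def
    by (rule sum.group[symmetric]) (auto simp: finite_motzkin_paths returns0_le)
  then show ?thesis
    by (simp add: returns_weight_def paths_with_returns_def sum_distrib_left)
qed

definition first_return :: "int list \<Rightarrow> nat" where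
  "first_return p = (LEAST i. 0 < i \<and> p ! i = 0)"

lemma first_return:
  assumes p: "p \<in> motzkin_paths n" and "0 < n"
  shows "0 < first_return p" "first_return p \<le> n" "p ! first_return p = 0"
    "\<And>i. 0 < i \<Longrightarrow> i < first_return p \<Longrightarrow> p ! i \<noteq> 0"
proof -
  have n: "0 < n \<and> p ! n = 0"
    using assms motzkin_pathsD(3) by blast
  show "0 < first_return p" "p ! first_return p = 0"
    using LeastI[of "\<lambda>i. 0 < i \<and> p ! i = 0", OF n] by (simp_all add: first_return_def)
  show "first_return p \<le> n"
    unfolding first_return_def by (rule Least_le) (rule n)
  show "\<And>i. 0 < i \<Longrightarrow> i < first_return p \<Longrightarrow> p ! i \<noteq> 0"
    unfolding first_return_def using not_less_Least by blast
qed

lemma first_return_path_concat: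
  assumes q: "q \<in> paths_with_returns j 1" and r: "r \<in> motzkin_paths m"
  shows "first_return (path_concat q r) = j"
proof -
  have qj: "q \<in> motzkin_paths j" and "0 < j" and no_return: "\<And>i. 0 < i \<Longrightarrow> i < j \<Longrightarrow> q ! i \<noteq> 0"
    using q returns0_eq_1_iff[of q j] by (auto simp: paths_with_returns_def)
  show ?thesis
    unfolding first_return_def
  proof (rule Least_equality)
    show "0 < j \<and> path_concat q r ! j = 0"
      using \<open>0 < j\<close> path_concat_nth_le[OF qj r] motzkin_pathsD(3)[OF qj] by simp
    show "j \<le> i" if "0 < i \<and> path_concat q r ! i = 0" for i
      using that no_return[of i] path_concat_nth_le[OF qj r, of i] by (cases "j \<le> i") auto
  qed
qed

lemma bij_betw_path_concat:
  "bij_betw (\<lambda>(j, q, r). path_concat q r)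
     (SIGMA j:{1..n}. paths_with_returns j 1 \<times> paths_with_returns (n - j) k)
     (paths_with_returns n (Suc k))"
proof (rule bij_betw_byWitness[where f' = "\<lambda>p. (first_return p, take (Suc (first_return p)) p,
    drop (first_return p) p)"], safe)
  fix j q r assume j: "j \<in> {1..n}" and q: "q \<in> paths_with_returns j 1"
    and r: "r \<in> paths_with_returns (n - j) k"
  then have qj: "q \<in> motzkin_paths j" and rj: "r \<in> motzkin_paths (n - j)"
    by (simp_all add: paths_with_returns_def)
  show "first_return (path_concat q r) = j"
    by (rule first_return_path_concat[OF q rj])
  then show "take (Suc (first_return (path_concat q r))) (path_concat q r) = q"
    "drop (first_return (path_concat q r)) (path_concat q r) = r"
    using take_path_concat[OF qj rj] drop_path_concat[OF qj rj] by simp_all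
  show "path_concat q r \<in> paths_with_returns n (Suc k)"
    using path_concat_in_motzkin_paths[OF qj rj] returns0_path_concat[OF qj rj] j q r
    by (simp add: paths_with_returns_def)
next
  fix p assume "p \<in> paths_with_returns n (Suc k)"
  then have p: "p \<in> motzkin_paths n" and rp: "returns0 p = Suc k"
    by (auto simp: paths_with_returns_def)
  then have "0 < n"
    using returns0_le[OF p] by simp
  note R = first_return[OF p this]
  note S = motzkin_path_split[OF p R(2,3)]
  show "path_concat (take (Suc (first_return p)) p) (drop (first_return p) p) = p"
    by (rule S(3))
  show "first_return p \<in> {1..n}"
    using R by simp
  have "returns0 (take (Suc (first_return p)) p) = 1"
    using returns0_eq_1_iff[OF S(1)] R by (simp add: nth_take)
  moreover have "returns0 (drop (first_return p) p) = k"
    using returns0_path_concat[OF S(1,2)] S(3) rp calculation by simp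
  ultimately show "take (Suc (first_return p)) p \<in> paths_with_returns (first_return p) 1"
    "drop (first_return p) p \<in> paths_with_returns (n - first_return p) k"
    using S(1,2) by (simp_all add: paths_with_returns_def)
qed

lemma returns_weight_Suc:
  "returns_weight a lam n (Suc k) = (\<Sum>j=1..n. returns_weight a lam j 1 * returns_weight a lam (n - j) k)"
proof -
  have "returns_weight a lam n (Suc k)
      = (\<Sum>(j, q, r)\<in>(SIGMA j:{1..n}. paths_with_returns j 1 \<times> paths_with_returns (n - j) k).
           path_val a lam (path_concat q r))"
    unfolding returns_weight_def
    using sum.reindex_bij_betw[OF bij_betw_path_concat, of "path_val a lam"] by (simp add: split_beta)
  also have "\<dots> = (\<Sum>(j, q, r)\<in>(SIGMA j:{1..n}. paths_with_returns j 1 \<times> paths_with_returns (n - j) k).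
           path_val a lam q * path_val a lam r)"
    by (intro sum.cong refl) (auto simp: paths_with_returns_def path_val_path_concat)
  also have "\<dots> = (\<Sum>j=1..n. \<Sum>(q, r)\<in>paths_with_returns j 1 \<times> paths_with_returns (n - j) k.
           path_val a lam q * path_val a lam r)"
    by (subst sum.Sigma) (auto simp: finite_paths_with_returns)
  finally show ?thesis
    by (simp add: returns_weight_def sum_product sum.cartesian_product)
qed

lemma paths_with_returns_0: "paths_with_returns 0 k = (if k = 0 then {[0]} else {})"
proof -
  have "returns0 [0] = 0"
    by (simp add: returns0_def)
  then show ?thesis
    by (auto simp: paths_with_returns_def motzkin_paths_0)
qed

lemma returns_weight_0_right: "returns_weight a lam n 0 = (if n = 0 then 1 else 0)"
proof (cases "n = 0")
  case True
  then show ?thesis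
    by (simp add: returns_weight_def paths_with_returns_0 path_val_def)
next
  case False
  then have "paths_with_returns n 0 = {}"
    using returns0_pos by (fastforce simp: paths_with_returns_def)
  then show ?thesis
    using False by (simp add: returns_weight_def)
qed

lemma returns_weight_0_Suc: "returns_weight a lam 0 (Suc k) = 0"
  by (simp add: returns_weight_def paths_with_returns_0)

definition primitive_series :: "(nat \<Rightarrow> complex) \<Rightarrow> (nat \<Rightarrow> complex) \<Rightarrow> complex fps" where
  "primitive_series a lam = Abs_fps (\<lambda>n. returns_weight a lam n 1)"

lemma primitive_series_power_nth: "primitive_series a lam ^ k $ n = returns_weight a lam n k"
proof (induction k arbitrary: n)
  case 0
  then show ?case by (simp add: returns_weight_0_right)
next
  case (Suc k)
  have "primitive_series a lam ^ Suc k $ n = (\<Sum>j=0..n. returns_weight a lam j 1 * returns_weight a lam (n - j) k)"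
    unfolding power_Suc fps_mult_nth Suc.IH by (simp add: primitive_series_def)
  also have "\<dots> = (\<Sum>j=1..n. returns_weight a lam j 1 * returns_weight a lam (n - j) k)"
    using returns_weight_0_Suc[of a lam 0] by (subst sum.atLeast_Suc_atMost) simp_all
  also have "\<dots> = returns_weight a lam n (Suc k)"
    by (rule returns_weight_Suc[symmetric])
  finally show ?case .
qed

lemma moment_series_mult_one_minus_primitive:
  "Abs_fps (moment a lam) * (1 - primitive_series a lam) = 1"
proof (rule geometric_fps_mult_one_minus)
  show "primitive_series a lam $ 0 = 0"
    using returns_weight_0_Suc[of a lam 0] by (simp add: primitive_series_def)
  fix n
  show "Abs_fps (moment a lam) $ n = (\<Sum>k\<le>n. primitive_series a lam ^ k $ n)"
    using sum_motzkin_paths_by_returns[where f = "\<lambda>_. 1" and n = n and a = a and lam = lam]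
    by (simp add: moment_def primitive_series_power_nth returns_weight_0_right)
qed

theorem mainTheorem1:
  fixes a lam :: "nat \<Rightarrow> complex" and n :: nat
  assumes "n \<ge> 2"
  shows "free_cumulant (moment a lam) n =
    (\<Sum>p\<in>motzkin_paths n.
       (-1) ^ (returns0 p - 1) / of_nat (n - 1) * of_nat ((n - 1) choose returns0 p)
       * path_val a lam p)"
proof -
  \<comment> \<open>At \<open>k = 0\<close> the exponent \<open>k - 1\<close> truncates to 0; that term vanishes since every
    path of positive length returns to zero.\<close>
  define c :: "nat \<Rightarrow> complex"
    where "c k = (-1) ^ (k - 1) / of_nat (n - 1) * of_nat ((n - 1) choose k)" for k
  have "free_cumulant (moment a lam) n = - ((1 - primitive_series a lam) ^ (n - 1) $ n) / of_nat (n - 1)"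
    using assms moment_series_mult_one_minus_primitive
    by (intro free_cumulant_eq_coeff_power) (simp_all add: moment_def)
  also have "(1 - primitive_series a lam) ^ (n - 1) $ n
      = (\<Sum>k\<le>n. (-1) ^ k * of_nat ((n - 1) choose k) * returns_weight a lam n k)"
    unfolding one_minus_power_nth primitive_series_power_nth
    by (rule sum.mono_neutral_left) auto
  also have "- (\<Sum>k\<le>n. (-1) ^ k * of_nat ((n - 1) choose k) * returns_weight a lam n k) / of_nat (n - 1)
      = (\<Sum>k\<le>n. c k * returns_weight a lam n k)"
    unfolding sum_divide_distrib sum_negf[symmetric]
  proof (intro sum.cong refl)
    fix k
    show "- ((-1) ^ k * of_nat ((n - 1) choose k) * returns_weight a lam n k) / of_nat (n - 1)
        = c k * returns_weight a lam n k"
      using assms by (cases k) (simp_all add: c_def returns_weight_0_right)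
  qed
  also have "\<dots> = (\<Sum>p\<in>motzkin_paths n. c (returns0 p) * path_val a lam p)"
    by (rule sum_motzkin_paths_by_returns[symmetric])
  finally show ?thesis
    by (simp add: c_def)
qed

end
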